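(* Let $k\in\mathbb{Z}$ and $z\in\mathbb{C}\setminus\{0,-1/e\}$ (with $z$ in the domain of $W_k$). Then $$|W_k'(z)| \le \frac{1}{|z|}\max\left(3, \frac{1.5}{\sqrt{|ez+1|}}\right).$$
   Context: $W_k$ denotes the $k$-th branch of the Lambert $W$ function (inverse of $w\mapsto we^w$) in the standard convention of Corless, Gonnet, Hare, Jeffrey and Knuth (1996). On a branch cut, values are defined by continuity from the upper half plane and $W_k'$ denotes the derivative of the fixed branch $W_k$ (directional derivative along the cut there); $W'(z)=\frac{1}{z}\frac{W(z)}{1+W(z)}$. *)

theory Defs
  imports "HOL-Analysis.Analysis"
begin

text \<open>Range of the k-th branch of Lambert W (Corless, Gonnet, Hare, Jeffrey, Knuth 1996).
  The boundaries between ranges are the curves x = - y cot y (images of the branch cut),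
  together with the ray (-inf,-1] separating W_1 and W_{-1}.  Each branch owns its upper
  boundary (counter-clockwise continuity = continuity from the upper half plane on the cut).\<close>

definition LambertW_range :: "int \<Rightarrow> complex set" where
  "LambertW_range k = {w. let x = Re w; y = Im w in
     (if k = 0 then
        (-pi < y \<and> y < 0 \<and> x > - y * cot y) \<or>
        (y = 0 \<and> x \<ge> -1) \<or>
        (0 < y \<and> y < pi \<and> x \<ge> - y * cot y)
      else if k > 0 then
        ((2*k-2)*pi < y \<and> y < (2*k-1)*pi \<and> x < - y * cot y) \<or>
        ((2*k-1)*pi \<le> y \<and> y \<le> 2*k*pi) \<or>
        (2*k*pi < y \<and> y < (2*k+1)*pi \<and> x \<ge> - y * cot y)
      else
        ((2*k-1)*pi < y \<and> y < 2*k*pi \<and> x > - y * cot y) \<or>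
        (2*k*pi \<le> y \<and> y \<le> (2*k+1)*pi) \<or>
        ((2*k+1)*pi < y \<and> y < (2*k+2)*pi \<and> x \<le> - y * cot y) \<or>
        (k = -1 \<and> y = 0 \<and> x < -1))}"

definition LambertW :: "int \<Rightarrow> complex \<Rightarrow> complex" where
  "LambertW k z = (THE w. w \<in> LambertW_range k \<and> w * exp w = z)"

definition LambertW_deriv :: "int \<Rightarrow> complex \<Rightarrow> complex" where
  "LambertW_deriv k z = LambertW k z / (z * (1 + LambertW k z))"

end

theory Submission
  imports Defs "HOL-Real_Asymp.Real_Asymp"
begin

text \<open>
  Since \<open>W'(z) = W / (z (1 + W))\<close>, the claim is \<open>|W| / |1 + W| \<le> max 3 (1.5 / sqrt |ez + 1|)\<close>.
  If \<open>|W| \<le> 3 |1 + W|\<close> this is trivial. Otherwise \<open>t = 1 + W\<close> satisfies \<open>|t| < 1/2\<close> and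
  \<open>ez + 1 = 1 + (t - 1) e\<^sup>t = t\<^sup>2/2 + t\<^sup>3/3 + \<dots>\<close>, whose modulus is at most \<open>|t|\<^sup>2\<close>, while \<open>|W| \<le> 3/2\<close>.

  Most of the work goes into showing that \<open>LambertW k z\<close> really is a preimage of \<open>z\<close>, i.e. that
  the range of \<open>W\<^sub>k\<close> contains exactly one solution of \<open>w e\<^sup>w = z\<close>. For nonreal \<open>w\<close> the
  boundary curves \<open>x = -y cot y\<close> are where \<open>Arg w + Im w\<close> crosses an odd multiple of \<open>\<pi>\<close>, so the
  range condition says \<open>Arg w + Im w \<in> ((2k-1)\<pi>, (2k+1)\<pi>]\<close>; as \<open>Arg w + Im w\<close> is an argument of
  \<open>w e\<^sup>w\<close>, this fixes it to \<open>b = Arg z + 2k\<pi>\<close>. Along the curve \<open>Arg w + Im w = b\<close>,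
  \<open>ln |w e\<^sup>w|\<close> is a strictly decreasing function of \<open>|Arg w|\<close> running from \<open>+\<infinity>\<close> to \<open>-\<infinity>\<close>
  (to \<open>-1\<close> if \<open>|b| = \<pi>\<close>). Real solutions are handled by monotonicity of \<open>x e\<^sup>x\<close> on either side of \<open>-1\<close>.
\<close>

section \<open>Signs of sines and the boundary curves of the branch ranges\<close>

lemma sin_nonneg_iff:
  assumes "- pi < t" "t < 2 * pi"
  shows "0 \<le> sin t \<longleftrightarrow> 0 \<le> t \<and> t \<le> pi"
proof -
  have "sin t < 0" if "t < 0" using sin_gt_zero[of "- t"] that assms by simp
  moreover have "sin t < 0" if "pi < t" using sin_lt_zero that assms by simp
  ultimately show ?thesis using sin_ge_zero by force
qed

lemma sin_pos_iff:
  assumes "- pi < t" "t < 2 * pi"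
  shows "0 < sin t \<longleftrightarrow> 0 < t \<and> t < pi"
  using sin_nonneg_iff[OF assms] sin_gt_zero[of t] by (smt (verit) sin_pi sin_zero)

lemma Re_Im_eq_polar: "Re w = cmod w * cos (Arg w)" "Im w = cmod w * sin (Arg w)"
  by (metis Re_rcis Im_rcis rcis_cmod_Arg)+

lemma cot_curve_iff:
  fixes w :: complex and c :: real
  assumes "sin c = 0" "c < Im w" "Im w < c + pi"
  shows "- Im w * cot (Im w) \<le> Re w \<longleftrightarrow> c \<le> Arg w + Im w \<and> Arg w + Im w \<le> c + pi"
    and "- Im w * cot (Im w) < Re w \<longleftrightarrow> c < Arg w + Im w \<and> Arg w + Im w < c + pi"
proof -
  define y where "y = Im w - c"
  define t where "t = Arg w + Im w - c"
  have y: "0 < y" "y < pi" using assms by (simp_all add: y_def)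
  have t: "- pi < t" "t < 2 * pi" using y Arg_bounded[of w] by (auto simp: t_def y_def)
  have "cos c \<noteq> 0" using assms(1) sin_cos_squared_add[of c] by auto
  have sin_shift: "sin (x + c) = sin x * cos c" for x using assms(1) by (simp add: sin_add)
  have sin_y: "sin (Im w) = sin y * cos c" "sin y > 0"
    using sin_shift[of y] y by (simp_all add: y_def sin_gt_zero)
  have sin_t: "sin (Arg w + Im w) = sin t * cos c"
    using sin_shift[of t] by (simp add: t_def)
  have "w \<noteq> 0" using sin_y \<open>cos c \<noteq> 0\<close> by auto
  have "Re w + Im w * cot (Im w) = cmod w * sin (Arg w + Im w) / sin (Im w)"
    using sin_y \<open>cos c \<noteq> 0\<close>
    by (simp add: cot_def field_simps sin_add Re_Im_eq_polar(1)) (simp add: Re_Im_eq_polar(2))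
  also have "\<dots> = cmod w * sin t / sin y"
    using \<open>cos c \<noteq> 0\<close> by (simp add: sin_y sin_t)
  finally have key: "Re w + Im w * cot (Im w) = cmod w * sin t / sin y" .
  have "- Im w * cot (Im w) \<le> Re w \<longleftrightarrow> 0 \<le> sin t"
  proof -
    have "- Im w * cot (Im w) \<le> Re w \<longleftrightarrow> 0 \<le> Re w + Im w * cot (Im w)" by linarith
    with key sin_y(2) \<open>w \<noteq> 0\<close> show ?thesis by (simp add: zero_le_divide_iff zero_le_mult_iff)
  qed
  also have "\<dots> \<longleftrightarrow> 0 \<le> t \<and> t \<le> pi" using sin_nonneg_iff[OF t] .
  finally show "- Im w * cot (Im w) \<le> Re w \<longleftrightarrow> c \<le> Arg w + Im w \<and> Arg w + Im w \<le> c + pi"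
    by (simp add: t_def algebra_simps)
  have "- Im w * cot (Im w) < Re w \<longleftrightarrow> 0 < sin t"
  proof -
    have "- Im w * cot (Im w) < Re w \<longleftrightarrow> 0 < Re w + Im w * cot (Im w)" by linarith
    with key sin_y(2) \<open>w \<noteq> 0\<close> show ?thesis by (simp add: zero_less_divide_iff zero_less_mult_iff)
  qed
  also have "\<dots> \<longleftrightarrow> 0 < t \<and> t < pi" using sin_pos_iff[OF t] .
  finally show "- Im w * cot (Im w) < Re w \<longleftrightarrow> c < Arg w + Im w \<and> Arg w + Im w < c + pi"
    by (simp add: t_def algebra_simps)
qed

definition arg_strip :: "int \<Rightarrow> real set" where
  "arg_strip k = {(2 * of_int k - 1) * pi<..(2 * of_int k + 1) * pi}"

lemma Arg_add_in_arg_strip: "Arg z + 2 * of_int k * pi \<in> arg_strip k"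
  using Arg_bounded[of z] by (auto simp: arg_strip_def algebra_simps)

lemma arg_strip_unique:
  assumes "x \<in> arg_strip k" "x \<in> arg_strip j"
  shows "k = j"
proof (rule ccontr)
  assume "k \<noteq> j"
  then consider "k + 1 \<le> j" | "j + 1 \<le> k" by linarith
  then show False
  proof cases
    case 1
    then have "(2 * of_int (k + 1) - 1) * pi \<le> (2 * of_int j - 1) * pi"
      by (intro mult_right_mono) simp_all
    with assms show False by (simp add: arg_strip_def algebra_simps)
  next
    case 2
    then have "(2 * of_int (j + 1) - 1) * pi \<le> (2 * of_int k - 1) * pi"
      by (intro mult_right_mono) simp_all
    with assms show False by (simp add: arg_strip_def algebra_simps)
  qed
qed

lemma LambertW_range_nonreal_iff:
  fixes w :: complex and k :: int
  assumes "Im w \<noteq> 0"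
  shows "w \<in> LambertW_range k \<longleftrightarrow> Arg w + Im w \<in> arg_strip k"
proof -
  txt \<open>Every curve condition in the definition of the range sits in a strip
    \<open>c < Im w < c + \<pi>\<close> with \<open>c \<in> \<pi>\<int>\<close>, where \<open>cot_curve_iff\<close> turns it into bounds on
    \<open>Arg w + Im w\<close>; what is left is linear arithmetic in \<open>K = k\<pi>\<close>.\<close>
  define K where "K = of_int k * pi"
  have distr: "(2 * of_int k - 2) * pi = 2 * K - 2 * pi" "(2 * of_int k - 1) * pi = 2 * K - pi"
    "2 * of_int k * pi = 2 * K" "(2 * of_int k + 1) * pi = 2 * K + pi"
    "(2 * of_int k + 2) * pi = 2 * K + 2 * pi"
    by (simp_all add: K_def algebra_simps)
  have sin_zero: "sin (2 * K + of_int j * pi) = 0" for j :: int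
    using sin_npi_int[of "2 * k + j"] by (simp add: K_def algebra_simps)
  note curve = cot_curve_iff[where w = w, OF sin_zero[of "- 2"]] cot_curve_iff[where w = w, OF sin_zero[of 0]]
    cot_curve_iff[where w = w, OF sin_zero[of "- 1"]] cot_curve_iff[where w = w, OF sin_zero[of 1]]
  have arg: "0 < Arg w \<and> Arg w < pi" if "Im w > 0"
    using that Arg_lt_pi by blast
  have arg': "- pi < Arg w \<and> Arg w < 0" if "Im w < 0"
    using that Arg_neg_iff Arg_bounded by blast
  consider "k = 0" | "k \<ge> 1" | "k \<le> - 1" by linarith
  then show ?thesis
  proof cases
    case 1
    with curve arg arg' assms show ?thesis
      by (simp add: LambertW_range_def Let_def arg_strip_def distr K_def) (smt (verit))
  next
    case 2
    then have "K \<ge> pi" using mult_right_mono[of 1 "of_int k" pi] by (simp add: K_def)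
    with 2 curve arg arg' assms show ?thesis
      by (simp add: LambertW_range_def Let_def arg_strip_def distr) (smt (verit))
  next
    case 3
    then have "K \<le> - pi" using mult_right_mono[of "of_int k" "- 1" pi] by (simp add: K_def)
    with 3 curve arg arg' assms show ?thesis
      by (simp add: LambertW_range_def Let_def arg_strip_def distr) (smt (verit))
  qed
qed

lemma LambertW_range_real_iff:
  fixes k :: int
  assumes "Im w = 0"
  shows "w \<in> LambertW_range k \<longleftrightarrow> (k = 0 \<and> - 1 \<le> Re w) \<or> (k = - 1 \<and> Re w < - 1)"
proof -
  have "\<not> pi \<le> 0" using pi_gt_zero by linarith
  consider "k = 0" | "k = - 1" | "k \<ge> 1" | "k \<le> - 2" by linarith
  then show ?thesis
  proof cases
    case 3
    then have "0 < pi * of_int k" by simp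
    with 3 assms show ?thesis
      by (simp add: LambertW_range_def Let_def algebra_simps) (use \<open>0 < pi * of_int k\<close> in linarith)
  next
    case 4
    then have "of_int k * pi \<le> - 2 * pi" by (intro mult_right_mono) simp_all
    with 4 assms show ?thesis
      by (auto simp: LambertW_range_def Let_def algebra_simps) (use pi_gt_zero in linarith)+
  qed (use assms \<open>\<not> pi \<le> 0\<close> in \<open>simp_all add: LambertW_range_def Let_def\<close>)
qed

section \<open>Preimages under \<open>w e\<^sup>w\<close> in polar form\<close>

lemma wexp_eq_rcis: "w * exp w = rcis (cmod w * exp (Re w)) (Arg w + Im w)"
proof -
  have "w * exp w = rcis (cmod w) (Arg w) * rcis (exp (Re w)) (Im w)"
    by (simp add: rcis_cmod_Arg exp_eq_polar) (simp add: rcis_def)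
  then show ?thesis by (simp add: rcis_mult)
qed

lemma rcis_eq_iff_arg_strip:
  assumes "r > 0" "z \<noteq> 0" "\<theta> \<in> arg_strip k"
  shows "rcis r \<theta> = z \<longleftrightarrow> r = cmod z \<and> \<theta> = Arg z + 2 * of_int k * pi"
proof -
  define \<phi> where "\<phi> = \<theta> - 2 * of_int k * pi"
  have "cis \<phi> = cis \<theta> / cis (2 * pi * of_int k)"
    unfolding \<phi>_def cis_divide by (simp add: mult_ac)
  then have "rcis r \<theta> = rcis r \<phi>"
    by (simp add: rcis_def)
  moreover have "Arg (rcis r \<phi>) = \<phi>"
    using assms by (intro Arg_rcis) (auto simp: \<phi>_def arg_strip_def algebra_simps)
  ultimately show ?thesis
    using assms rcis_cmod_Arg[of z] by (auto simp: \<phi>_def)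
qed

lemma Arg_nonreal:
  assumes "Im w \<noteq> 0"
  shows "0 < Arg w * Im w" "\<bar>Arg w\<bar> < pi"
  using Arg_lt_pi[of w] Arg_neg_iff[of w] Arg_bounded[of w] assms
  by (auto simp: zero_less_mult_iff)

lemma Re_eq_Im_cot_Arg:
  assumes "Im w \<noteq> 0"
  shows "Re w = Im w * cot (Arg w)"
  using assms Re_Im_eq_polar[of w] by (auto simp: cot_def)

definition log_norm_wexp :: "real \<Rightarrow> real \<Rightarrow> real" where
  "log_norm_wexp b a = ln (b - a) - ln (sin a) + (b - a) * cot a"

lemma ln_norm_wexp_nonreal:
  assumes "Im w \<noteq> 0"
  shows "ln (cmod w * exp (Re w)) = log_norm_wexp \<bar>Arg w + Im w\<bar> \<bar>Arg w\<bar>"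
proof -
  define a where "a = \<bar>Arg w\<bar>"
  define s where "s = \<bar>Im w\<bar>"
  have "0 < a" "a < pi" "\<bar>Arg w + Im w\<bar> = a + s" "s > 0"
    using Arg_nonreal[OF assms] assms by (auto simp: a_def s_def zero_less_mult_iff)
  then have "sin a > 0" by (simp add: sin_gt_zero)
  have "cmod w = Im w / sin (Arg w)"
    using assms Re_Im_eq_polar(2)[of w] by auto
  also have "\<dots> = s / sin a"
    using Arg_nonreal(1)[OF assms] by (auto simp: a_def s_def zero_less_mult_iff)
  finally have norm: "cmod w = s / sin a" .
  have "Re w = s * cot a"
    using Re_eq_Im_cot_Arg[OF assms] Arg_nonreal(1)[OF assms]
    by (auto simp: a_def s_def zero_less_mult_iff cot_def)
  with norm \<open>sin a > 0\<close> \<open>s > 0\<close> \<open>\<bar>Arg w + Im w\<bar> = a + s\<close> show ?thesis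
    by (simp add: log_norm_wexp_def ln_mult ln_div flip: a_def)
qed

lemma nonreal_solution_iff:
  assumes "Im w \<noteq> 0" "z \<noteq> 0"
  shows "w \<in> LambertW_range k \<and> w * exp w = z \<longleftrightarrow>
           Arg w + Im w = Arg z + 2 * of_int k * pi \<and>
           log_norm_wexp \<bar>Arg z + 2 * of_int k * pi\<bar> \<bar>Arg w\<bar> = ln (cmod z)"
proof -
  have "w \<noteq> 0" using assms(1) by auto
  then have pos: "cmod w * exp (Re w) > 0" by simp
  have "w \<in> LambertW_range k \<and> w * exp w = z \<longleftrightarrow>
          Arg w + Im w = Arg z + 2 * of_int k * pi \<and> cmod w * exp (Re w) = cmod z"
    unfolding LambertW_range_nonreal_iff[OF assms(1)] wexp_eq_rcis
    using rcis_eq_iff_arg_strip[OF pos assms(2)] Arg_add_in_arg_strip[of z k] by metis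
  also have "cmod w * exp (Re w) = cmod z \<longleftrightarrow> ln (cmod w * exp (Re w)) = ln (cmod z)"
    using pos assms(2) by simp
  finally show ?thesis
    by (auto simp: ln_norm_wexp_nonreal[OF assms(1)])
qed

lemma nonreal_solution_exists:
  assumes "z \<noteq> 0" "b = Arg z + 2 * of_int k * pi" "b \<noteq> 0"
    and "a \<in> {0<..<min \<bar>b\<bar> pi}" "log_norm_wexp \<bar>b\<bar> a = ln (cmod z)"
  shows "\<exists>w\<in>LambertW_range k. w * exp w = z"
proof -
  define \<alpha> where "\<alpha> = sgn b * a"
  define w where "w = rcis ((b - \<alpha>) / sin \<alpha>) \<alpha>"
  have "sin a > 0" using assms(4) by (simp add: sin_gt_zero)
  have \<alpha>: "\<bar>\<alpha>\<bar> = a" "- pi < \<alpha>" "\<alpha> \<le> pi" "(b - \<alpha>) / sin \<alpha> > 0"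
    using assms(3,4) \<open>sin a > 0\<close> by (auto simp: \<alpha>_def sgn_if divide_neg_pos)
  moreover have "sin \<alpha> \<noteq> 0"
    using \<alpha>(4) by auto
  ultimately have "Arg w = \<alpha>" "Im w = b - \<alpha>"
    by (simp_all add: w_def Arg_rcis)
  moreover have "b - \<alpha> \<noteq> 0"
    using \<alpha>(4) by auto
  ultimately have "w \<in> LambertW_range k \<and> w * exp w = z"
    using nonreal_solution_iff[of w z k] assms \<alpha>(1) by simp
  then show ?thesis by blast
qed

lemma real_solution_iff:
  assumes "Im w = 0"
  shows "w \<in> LambertW_range k \<and> w * exp w = z \<longleftrightarrow>
           ((k = 0 \<and> - 1 \<le> Re w) \<or> (k = - 1 \<and> Re w < - 1)) \<and> z = of_real (Re w * exp (Re w))"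
proof -
  have "w = of_real (Re w)" using assms by (simp add: complex_eq_iff)
  then have "w * exp w = of_real (Re w * exp (Re w))" by (metis exp_of_real of_real_mult)
  then show ?thesis using LambertW_range_real_iff[OF assms] by auto
qed

lemma real_solution_exists:
  assumes "(k = 0 \<and> - 1 \<le> x) \<or> (k = - 1 \<and> x < - 1)"
  shows "\<exists>w\<in>LambertW_range k. w * exp w = of_real (x * exp x)"
proof -
  have "of_real x \<in> LambertW_range k \<and> of_real x * exp (of_real x :: complex) = of_real (x * exp x)"
    using real_solution_iff[of "of_real x" k "of_real (x * exp x)"] assms by simp
  then show ?thesis by blast
qed

section \<open>Monotonicity and range of \<open>log_norm_wexp\<close>\<close>

lemma log_norm_wexp_has_derivative:
  assumes "0 < a" "a < pi" "a < b"
  shows "(log_norm_wexp b has_real_derivative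
           - (((b - a) + sin a * cos a)\<^sup>2 + sin a ^ 4) / ((b - a) * (sin a)\<^sup>2)) (at a)"
proof -
  have "sin a > 0" using assms sin_gt_zero by auto
  have "(log_norm_wexp b has_real_derivative
           - 1 / (b - a) - cos a / sin a - cot a - (b - a) / (sin a)\<^sup>2) (at a)"
    unfolding log_norm_wexp_def[abs_def] using \<open>sin a > 0\<close> assms
    by (auto intro!: derivative_eq_intros DERIV_cot simp: field_simps power2_eq_square)
  also have "- 1 / (b - a) - cos a / sin a - cot a - (b - a) / (sin a)\<^sup>2
      = - ((sin a)\<^sup>2 + 2 * (b - a) * sin a * cos a + (b - a)\<^sup>2) / ((b - a) * (sin a)\<^sup>2)"
    using \<open>sin a > 0\<close> assms by (simp add: cot_def field_simps power2_eq_square)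
  also have "(sin a)\<^sup>2 + 2 * (b - a) * sin a * cos a + (b - a)\<^sup>2 = ((b - a) + sin a * cos a)\<^sup>2 + sin a ^ 4"
    using sin_cos_squared_add[of a] by algebra
  finally show ?thesis .
qed

lemma log_norm_wexp_strict_antimono:
  assumes "0 < a1" "a1 < a2" "a2 < b" "a2 < pi"
  shows "log_norm_wexp b a2 < log_norm_wexp b a1"
proof (rule DERIV_neg_imp_decreasing[OF assms(2)])
  fix a assume a: "a1 \<le> a" "a \<le> a2"
  then have "sin a > 0" using assms sin_gt_zero by auto
  show "\<exists>D. (log_norm_wexp b has_real_derivative D) (at a) \<and> D < 0"
  proof (intro exI conjI)
    show "(log_norm_wexp b has_real_derivative
           - (((b - a) + sin a * cos a)\<^sup>2 + sin a ^ 4) / ((b - a) * (sin a)\<^sup>2)) (at a)"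
      using a assms by (intro log_norm_wexp_has_derivative) auto
    show "- (((b - a) + sin a * cos a)\<^sup>2 + sin a ^ 4) / ((b - a) * (sin a)\<^sup>2) < 0"
    proof (rule divide_neg_pos)
      have "0 < sin a ^ 4" "0 \<le> ((b - a) + sin a * cos a)\<^sup>2"
        using \<open>sin a > 0\<close> by simp_all
      then show "- (((b - a) + sin a * cos a)\<^sup>2 + sin a ^ 4) < 0"
        by linarith
      show "0 < (b - a) * (sin a)\<^sup>2"
        using a assms \<open>sin a > 0\<close> by simp
    qed
  qed
qed

lemma log_norm_wexp_inj:
  assumes "a1 \<in> {0<..<min b pi}" "a2 \<in> {0<..<min b pi}" "log_norm_wexp b a1 = log_norm_wexp b a2"
  shows "a1 = a2"
  using log_norm_wexp_strict_antimono[of a1 a2 b] log_norm_wexp_strict_antimono[of a2 a1 b] assms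
  by (cases a1 a2 rule: linorder_cases) auto

lemma continuous_on_log_norm_wexp: "continuous_on {0<..<min b pi} (log_norm_wexp b)"
  using log_norm_wexp_has_derivative
  by (intro continuous_at_imp_continuous_on ballI DERIV_isCont) auto

lemma log_norm_wexp_at_right_0: "b > 0 \<Longrightarrow> filterlim (log_norm_wexp b) at_top (at_right 0)"
  unfolding log_norm_wexp_def[abs_def] cot_def by real_asymp

lemma log_norm_wexp_at_left_b:
  assumes "0 < b" "b < pi"
  shows "filterlim (log_norm_wexp b) at_bot (at_left b)"
proof -
  have "sin b > 0" using assms sin_gt_zero by auto
  then have "((\<lambda>a. - ln (sin a) + (b - a) * cot a) \<longlongrightarrow> - ln (sin b) + (b - b) * cot b) (at_left b)"
    unfolding cot_def by (intro tendsto_intros) auto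
  moreover have "log_norm_wexp b = (\<lambda>a. (- ln (sin a) + (b - a) * cot a) + ln (b - a))"
    by (auto simp: log_norm_wexp_def)
  moreover have "filterlim (\<lambda>a. ln (b - a)) at_bot (at_left b)"
    by real_asymp
  ultimately show ?thesis
    by (simp add: filterlim_tendsto_add_at_bot_iff)
qed

lemma log_norm_wexp_at_left_pi: "b > pi \<Longrightarrow> filterlim (log_norm_wexp b) at_bot (at_left pi)"
  unfolding log_norm_wexp_def[abs_def] cot_def by real_asymp

lemma log_norm_wexp_pi_at_left_pi: "(log_norm_wexp pi \<longlongrightarrow> - 1) (at_left pi)"
  unfolding log_norm_wexp_def[abs_def] cot_def by real_asymp

lemma IVT_open_interval:
  fixes f :: "real \<Rightarrow> real"
  assumes "l < u" "continuous_on {l<..<u} f"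
    and "eventually (\<lambda>x. c < f x) (at_right l)" "eventually (\<lambda>x. f x < c) (at_left u)"
  shows "\<exists>x\<in>{l<..<u}. f x = c"
proof -
  obtain b1 where b1: "b1 > l" "\<And>y. l < y \<Longrightarrow> y < b1 \<Longrightarrow> c < f y"
    using assms(3) by (auto simp: eventually_at_right_field)
  obtain b2 where b2: "b2 < u" "\<And>y. b2 < y \<Longrightarrow> y < u \<Longrightarrow> f y < c"
    using assms(4) by (auto simp: eventually_at_left_field)
  define m1 where "m1 = min b1 u"
  define x1 where "x1 = (l + m1) / 2"
  define m2 where "m2 = max b2 x1"
  define x2 where "x2 = (m2 + u) / 2"
  have "l < m1"
    using assms(1) b1 by (simp add: m1_def)
  then have x1: "l < x1" "x1 < m1"
    by (simp_all add: x1_def)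
  then have "m2 < u"
    using b2 by (simp add: m1_def m2_def)
  then have x2: "m2 < x2" "x2 < u"
    by (simp_all add: x2_def)
  have x: "l < x1" "x1 < x2" "x2 < u" "c < f x1" "f x2 < c"
    using x1 x2 b1 b2 by (auto simp: m1_def m2_def)
  have "continuous_on {x1..x2} f"
    using x by (auto intro: continuous_on_subset[OF assms(2)])
  then obtain x where "x1 \<le> x" "x \<le> x2" "f x = c"
    using IVT2'[of f x2 c x1] x by auto
  with x show ?thesis by auto
qed

lemma log_norm_wexp_surj:
  assumes "b > 0" "b \<noteq> pi"
  shows "\<exists>a\<in>{0<..<min b pi}. log_norm_wexp b a = c"
proof (rule IVT_open_interval)
  show "0 < min b pi" "continuous_on {0<..<min b pi} (log_norm_wexp b)"
    using assms by (simp_all add: continuous_on_log_norm_wexp)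
  show "\<forall>\<^sub>F a in at_right 0. c < log_norm_wexp b a"
    using log_norm_wexp_at_right_0[OF assms(1)] by (simp add: filterlim_at_top_dense)
  have "filterlim (log_norm_wexp b) at_bot (at_left (min b pi))"
    using assms log_norm_wexp_at_left_b log_norm_wexp_at_left_pi by (cases "b < pi") auto
  then show "\<forall>\<^sub>F a in at_left (min b pi). log_norm_wexp b a < c"
    by (simp add: filterlim_at_bot_dense)
qed

lemma log_norm_wexp_pi_surj:
  assumes "c > - 1"
  shows "\<exists>a\<in>{0<..<pi}. log_norm_wexp pi a = c"
proof (rule IVT_open_interval)
  show "0 < pi" "continuous_on {0<..<pi} (log_norm_wexp pi)"
    using continuous_on_log_norm_wexp[of pi] by simp_all
  show "\<forall>\<^sub>F a in at_right 0. c < log_norm_wexp pi a"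
    using log_norm_wexp_at_right_0[OF pi_gt_zero] by (simp add: filterlim_at_top_dense)
  show "\<forall>\<^sub>F a in at_left pi. log_norm_wexp pi a < c"
    using order_tendstoD(2)[OF log_norm_wexp_pi_at_left_pi assms] .
qed

lemma log_norm_wexp_pi_gt:
  assumes "0 < a" "a < pi"
  shows "log_norm_wexp pi a > - 1"
proof -
  define a' where "a' = (a + pi) / 2"
  have a': "a < a'" "a' < pi" using assms by (simp_all add: a'_def)
  have "- 1 \<le> log_norm_wexp pi a'"
  proof (rule tendsto_upperbound[OF log_norm_wexp_pi_at_left_pi])
    show "\<forall>\<^sub>F x in at_left pi. log_norm_wexp pi x \<le> log_norm_wexp pi a'"
      unfolding eventually_at_left_field
      using a' assms log_norm_wexp_strict_antimono[of a' _ pi] by (intro exI[of _ a']) force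
  qed simp
  also have "\<dots> < log_norm_wexp pi a"
    using a' assms by (intro log_norm_wexp_strict_antimono) auto
  finally show ?thesis .
qed

section \<open>The real function \<open>x e\<^sup>x\<close>\<close>

lemma wexp_real_has_derivative: "((\<lambda>x. x * exp x) has_real_derivative (1 + x) * exp x) (at x)"
  by (auto intro!: derivative_eq_intros simp: algebra_simps)

lemma continuous_on_wexp_real: "continuous_on S (\<lambda>x::real. x * exp x)"
  by (intro continuous_intros)

lemma wexp_real_strict_mono:
  fixes x y :: real
  assumes "- 1 \<le> x" "x < y"
  shows "x * exp x < y * exp y"
proof (rule DERIV_pos_imp_increasing_open[OF assms(2)])
  fix t assume "x < t" "t < y"
  with assms show "\<exists>D. ((\<lambda>x. x * exp x) has_real_derivative D) (at t) \<and> 0 < D"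
    by (intro exI[of _ "(1 + t) * exp t"] conjI wexp_real_has_derivative) simp
qed (rule continuous_on_wexp_real)

lemma wexp_real_strict_antimono:
  fixes x y :: real
  assumes "x < y" "y \<le> - 1"
  shows "y * exp y < x * exp x"
proof (rule DERIV_neg_imp_decreasing_open[OF assms(1)])
  fix t assume "x < t" "t < y"
  with assms show "\<exists>D. ((\<lambda>x. x * exp x) has_real_derivative D) (at t) \<and> D < 0"
    by (intro exI[of _ "(1 + t) * exp t"] conjI wexp_real_has_derivative) (simp add: mult_neg_pos)
qed (rule continuous_on_wexp_real)

lemma wexp_real_ge: "- exp (- 1) \<le> (x :: real) * exp x"
  using wexp_real_strict_mono[of "- 1" x] wexp_real_strict_antimono[of x "- 1"]
  by (cases x "- 1 :: real" rule: linorder_cases) auto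

lemma wexp_real_surj_ge:
  fixes c :: real
  assumes "- exp (- 1) \<le> c"
  shows "\<exists>x \<ge> - 1. x * exp x = c"
proof -
  define u where "u = max c 0"
  have "c \<le> u * exp u"
    using mult_left_mono[of 1 "exp u" u] by (simp add: u_def)
  then have "\<exists>x. - 1 \<le> x \<and> x \<le> u \<and> x * exp x = c"
    using assms by (intro IVT' continuous_on_wexp_real) (auto simp: u_def)
  then show ?thesis by blast
qed

lemma wexp_real_surj_lt:
  fixes c :: real
  assumes "- exp (- 1) < c" "c < 0"
  shows "\<exists>x < - 1. x * exp x = c"
proof -
  have "((\<lambda>x::real. x * exp x) \<longlongrightarrow> 0) at_bot"
    by real_asymp
  then have "eventually (\<lambda>x. c < x * exp x) at_bot"
    using assms(2) by (rule order_tendstoD(1))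
  then obtain N where N: "\<And>x. x \<le> N \<Longrightarrow> c < x * exp x"
    by (auto simp: eventually_at_bot_linorder)
  define l where "l = min N (- 2)"
  have "l \<le> - 1" "c < l * exp l"
    using N[of l] by (auto simp: l_def)
  then obtain x where "l \<le> x" "x \<le> - 1" "x * exp x = c"
    using IVT2'[of "\<lambda>x. x * exp x" "- 1" c l] assms continuous_on_wexp_real
    by auto
  moreover have "x \<noteq> - 1"
    using assms \<open>x * exp x = c\<close> by auto
  ultimately show ?thesis
    by (intro exI[of _ x]) simp
qed

section \<open>Well-definedness of \<open>W\<^sub>k\<close>\<close>

lemma no_real_and_nonreal_solution:
  assumes "Im w1 = 0" "Im w2 \<noteq> 0" "w1 \<in> LambertW_range k" "w2 \<in> LambertW_range k"
    and "w1 * exp w1 = w2 * exp w2"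
  shows False
proof -
  define z where "z = w2 * exp w2"
  define b where "b = Arg z + 2 * of_int k * pi"
  define x where "x = Re w1"
  have "z \<noteq> 0" using assms(2) by (auto simp: z_def)
  have sol: "Arg w2 + Im w2 = b" "log_norm_wexp \<bar>b\<bar> \<bar>Arg w2\<bar> = ln (cmod z)"
    using nonreal_solution_iff[OF assms(2) \<open>z \<noteq> 0\<close>, of k] assms(4) by (simp_all add: z_def b_def)
  have arg: "0 < \<bar>Arg w2\<bar>" "\<bar>Arg w2\<bar> < pi" "\<bar>Arg w2\<bar> < \<bar>b\<bar>"
    using Arg_nonreal[OF assms(2)] sol(1) assms(2) by (auto simp: zero_less_mult_iff)
  have x: "(k = 0 \<and> - 1 \<le> x) \<or> (k = - 1 \<and> x < - 1)" "z = of_real (x * exp x)"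
    using real_solution_iff[OF assms(1), of k z] assms(3,5) by (simp_all add: x_def z_def)
  show False
  proof (cases "x > 0")
    case True
    then have "Arg z = 0" using x(2) by simp
    with x(1) True have "b = 0" by (auto simp: b_def)
    with arg show False by simp
  next
    case False
    have "x \<noteq> 0" using x(2) \<open>z \<noteq> 0\<close> by auto
    with False have "Arg z = pi" using x(2) by (simp add: mult_neg_pos)
    with x(1) have "\<bar>b\<bar> = pi" by (auto simp: b_def)
    then have gt: "- 1 < ln (cmod z)"
      using log_norm_wexp_pi_gt[of "\<bar>Arg w2\<bar>"] arg sol(2) by simp
    have "cmod z = - (x * exp x)"
      using \<open>x \<noteq> 0\<close> False by (simp only: x(2) norm_of_real) (simp add: abs_mult)
    then have "cmod z \<le> exp (- 1)"
      using wexp_real_ge[of x] by simp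
    then have "ln (cmod z) \<le> - 1"
      using \<open>z \<noteq> 0\<close> by (metis ln_exp ln_le_cancel_iff exp_gt_zero zero_less_norm_iff)
    with gt show False by simp
  qed
qed

lemma real_solutions_eq:
  assumes "Im w1 = 0" "Im w2 = 0" "w1 \<in> LambertW_range k" "w2 \<in> LambertW_range k"
    and "w1 * exp w1 = w2 * exp w2"
  shows "w1 = w2"
proof -
  define z where "z = w2 * exp w2"
  define x1 x2 where "x1 = Re w1" and "x2 = Re w2"
  have x: "(k = 0 \<and> - 1 \<le> x1) \<or> (k = - 1 \<and> x1 < - 1)" "z = of_real (x1 * exp x1)"
    "(k = 0 \<and> - 1 \<le> x2) \<or> (k = - 1 \<and> x2 < - 1)" "z = of_real (x2 * exp x2)"
    using real_solution_iff[OF assms(1), of k z] real_solution_iff[OF assms(2), of k z] assms(3-5)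
    by (simp_all add: x1_def x2_def z_def)
  then have "x1 * exp x1 = x2 * exp x2"
    by (metis of_real_eq_iff)
  with x(1,3) have "x1 = x2"
    using wexp_real_strict_mono[of x1 x2] wexp_real_strict_mono[of x2 x1]
      wexp_real_strict_antimono[of x1 x2] wexp_real_strict_antimono[of x2 x1]
    by (cases x1 x2 rule: linorder_cases) auto
  with assms(1,2) show ?thesis by (simp add: complex_eq_iff x1_def x2_def)
qed

lemma nonreal_solutions_eq:
  assumes "Im w1 \<noteq> 0" "Im w2 \<noteq> 0" "w1 \<in> LambertW_range k" "w2 \<in> LambertW_range k"
    and "w1 * exp w1 = w2 * exp w2"
  shows "w1 = w2"
proof -
  define z where "z = w2 * exp w2"
  define b where "b = Arg z + 2 * of_int k * pi"
  have "z \<noteq> 0" using assms(2) by (auto simp: z_def)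
  have sol: "Arg w1 + Im w1 = b" "log_norm_wexp \<bar>b\<bar> \<bar>Arg w1\<bar> = ln (cmod z)"
    "Arg w2 + Im w2 = b" "log_norm_wexp \<bar>b\<bar> \<bar>Arg w2\<bar> = ln (cmod z)"
    using nonreal_solution_iff[OF assms(1) \<open>z \<noteq> 0\<close>, of k]
      nonreal_solution_iff[OF assms(2) \<open>z \<noteq> 0\<close>, of k] assms(3-5)
    by (simp_all add: z_def b_def)
  have "\<bar>Arg w1\<bar> \<in> {0<..<min \<bar>b\<bar> pi}" "\<bar>Arg w2\<bar> \<in> {0<..<min \<bar>b\<bar> pi}"
    "0 < Arg w1 * b" "0 < Arg w2 * b"
    using Arg_nonreal[OF assms(1)] Arg_nonreal[OF assms(2)] sol(1,3) assms(1,2)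
    by (auto simp: zero_less_mult_iff)
  then have "Arg w1 = Arg w2"
    using log_norm_wexp_inj[of "\<bar>Arg w1\<bar>" "\<bar>b\<bar>" "\<bar>Arg w2\<bar>"] sol(2,4)
    by (auto simp: zero_less_mult_iff abs_if split: if_splits)
  moreover from this have "Im w1 = Im w2"
    using sol(1,3) by simp
  ultimately show ?thesis
    using Re_eq_Im_cot_Arg[OF assms(1)] Re_eq_Im_cot_Arg[OF assms(2)] by (simp add: complex_eq_iff)
qed

lemma inj_on_wexp_LambertW_range: "inj_on (\<lambda>w. w * exp w) (LambertW_range k)"
proof (rule inj_onI)
  fix w1 w2 assume "w1 \<in> LambertW_range k" "w2 \<in> LambertW_range k" "w1 * exp w1 = w2 * exp w2"
  then show "w1 = w2"
    using real_solutions_eq nonreal_solutions_eq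
      no_real_and_nonreal_solution[of w1 w2 k] no_real_and_nonreal_solution[of w2 w1 k]
    by (cases "Im w1 = 0"; cases "Im w2 = 0") auto
qed

lemma negative_real_solution_exists:
  fixes c :: real
  assumes "c < 0" "c \<noteq> - exp (- 1)" "k = 0 \<or> k = - 1"
  shows "\<exists>w\<in>LambertW_range k. w * exp w = of_real c"
proof (cases "- exp (- 1) < c")
  case True
  show ?thesis
  proof (cases "k = 0")
    case True
    then show ?thesis
      using wexp_real_surj_ge[of c] \<open>- exp (- 1) < c\<close> real_solution_exists by force
  next
    case False
    then show ?thesis
      using wexp_real_surj_lt[of c] \<open>- exp (- 1) < c\<close> assms real_solution_exists by force
  qed
next
  case False
  with assms(2) have "exp (- 1) < cmod (of_real c)"
    by simp
  then have "ln (cmod (of_real c)) > - 1"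
    by (metis exp_gt_zero ln_exp ln_less_cancel_iff order.strict_trans)
  then obtain a where "a \<in> {0<..<pi}" "log_norm_wexp pi a = ln (cmod (of_real c))"
    using log_norm_wexp_pi_surj by blast
  moreover have "\<bar>Arg (of_real c) + 2 * of_int k * pi\<bar> = pi"
    using assms by auto
  ultimately show ?thesis
    using assms(1) by (intro nonreal_solution_exists[OF _ refl]) auto
qed

lemma Arg_add_multiple_2pi_eq_0:
  assumes "Arg z + 2 * of_int k * pi = 0"
  shows "Arg z = 0" "k = 0"
proof -
  have "0 \<in> arg_strip 0" by (simp add: arg_strip_def)
  then show "k = 0"
    using arg_strip_unique Arg_add_in_arg_strip[of z k] assms by metis
  with assms show "Arg z = 0" by simp
qed

lemma Arg_add_multiple_2pi_abs_eq_pi: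
  assumes "\<bar>Arg z + 2 * of_int k * pi\<bar> = pi"
  shows "Arg z = pi" "k = 0 \<or> k = - 1"
proof -
  have "pi \<in> arg_strip 0" "- pi \<in> arg_strip (- 1)"
    by (simp_all add: arg_strip_def)
  then have "(Arg z + 2 * of_int k * pi = pi \<and> k = 0) \<or> (Arg z + 2 * of_int k * pi = - pi \<and> k = - 1)"
    using arg_strip_unique Arg_add_in_arg_strip[of z k] assms by (metis abs_if minus_minus)
  then show "Arg z = pi" "k = 0 \<or> k = - 1"
    by auto
qed

text \<open>The hypothesis \<open>z \<noteq> -1/e\<close> is needed for \<open>k = -1\<close>: the branch point \<open>-1\<close> lies in the
  range of \<open>W\<^sub>0\<close>, and no other point of the range of \<open>W\<^sub>-\<^sub>1\<close> is mapped to \<open>-1/e\<close>.\<close>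

lemma LambertW_range_solution_exists:
  assumes "z \<noteq> 0" "z \<noteq> - 1 / exp 1"
  shows "\<exists>w\<in>LambertW_range k. w * exp w = z"
proof -
  define b where "b = Arg z + 2 * of_int k * pi"
  consider "b \<noteq> 0" "\<bar>b\<bar> \<noteq> pi" | "b = 0" | "\<bar>b\<bar> = pi" by blast
  then show ?thesis
  proof cases
    case 1
    then have "\<exists>a\<in>{0<..<min \<bar>b\<bar> pi}. log_norm_wexp \<bar>b\<bar> a = ln (cmod z)"
      by (intro log_norm_wexp_surj) auto
    then obtain a where "a \<in> {0<..<min \<bar>b\<bar> pi}" "log_norm_wexp \<bar>b\<bar> a = ln (cmod z)"
      by blast
    with 1 assms(1) show ?thesis
      by (intro nonreal_solution_exists[OF _ b_def]) auto
  next
    case 2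
    then have "k = 0" "Arg z = 0"
      using Arg_add_multiple_2pi_eq_0 by (simp_all add: b_def)
    then have z: "z = of_real (Re z)" "Re z > 0"
      using assms(1) by (auto simp: Arg_eq_0 complex_is_Real_iff complex_eq_iff)
    then have "- exp (- 1) \<le> Re z"
      using exp_gt_zero[of "- 1"] by linarith
    then obtain x where "- 1 \<le> x" "x * exp x = Re z"
      using wexp_real_surj_ge by blast
    with z \<open>k = 0\<close> show ?thesis
      using real_solution_exists[of k x] by simp
  next
    case 3
    then have k: "k = 0 \<or> k = - 1" and "Re z < 0" "Im z = 0"
      using Arg_add_multiple_2pi_abs_eq_pi[of z k] by (auto simp: b_def Arg_eq_pi)
    then have z: "z = of_real (Re z)"
      by (simp add: complex_eq_iff)
    have "(exp 1 :: complex) = of_real (exp 1)"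
      by (metis exp_of_real of_real_1)
    then have "of_real (- exp (- 1)) = (- 1 / exp 1 :: complex)"
      by (simp add: exp_minus divide_inverse)
    with z assms(2) have "Re z \<noteq> - exp (- 1)"
      by auto
    with z k \<open>Re z < 0\<close> show ?thesis
      by (metis negative_real_solution_exists)
  qed
qed

lemma LambertW_wexp:
  assumes "z \<noteq> 0" "z \<noteq> - 1 / exp 1"
  shows "LambertW k z * exp (LambertW k z) = z"
proof -
  have "\<exists>!w. w \<in> LambertW_range k \<and> w * exp w = z"
    using LambertW_range_solution_exists[OF assms] inj_on_wexp_LambertW_range[of k]
    by (auto dest: inj_onD)
  then have "LambertW k z \<in> LambertW_range k \<and> LambertW k z * exp (LambertW k z) = z"
    unfolding LambertW_def by (rule theI')
  then show ?thesis ..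
qed

section \<open>The derivative bound\<close>

lemma norm_one_plus_shifted_wexp_le:
  fixes t :: complex
  assumes "norm t \<le> 1 / 2"
  shows "norm (1 + (t - 1) * exp t) \<le> (norm t)\<^sup>2"
proof -
  define r where "r = norm t"
  define R where "R = exp t - (1 + t + t\<^sup>2 / 2 + t ^ 3 / 6)"
  have r: "0 \<le> r" "r \<le> 1 / 2" using assms by (simp_all add: r_def)
  have "norm R \<le> exp \<bar>Re t\<bar> * r ^ 4 / 6"
    using Taylor_exp[of t 3] by (simp add: R_def r_def eval_nat_numeral fact_numeral algebra_simps)
  also have "exp \<bar>Re t\<bar> \<le> 2"
    using abs_Re_le_cmod[of t] assms exp_half_le2 by (smt (verit) exp_le_cancel_iff)
  then have "exp \<bar>Re t\<bar> * r ^ 4 / 6 \<le> 2 * r ^ 4 / 6"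
    using mult_right_mono[of _ 2 "r ^ 4"] r(1) by (simp add: mult.commute)
  finally have R: "norm R \<le> r ^ 4 / 3" by simp
  have "1 + (t - 1) * exp t = t\<^sup>2 / 2 + t ^ 3 / 3 + t ^ 4 / 6 + (t - 1) * R"
    by (simp add: R_def field_simps power2_eq_square power3_eq_cube power4_eq_xxxx)
  moreover have "norm ((t - 1) * R) \<le> (1 + r) * (r ^ 4 / 3)"
    unfolding norm_mult using R norm_triangle_ineq4[of t 1] r(1)
    by (intro mult_mono) (simp_all add: r_def)
  ultimately have "norm (1 + (t - 1) * exp t) \<le> r\<^sup>2 / 2 + r ^ 3 / 3 + r ^ 4 / 6 + (1 + r) * (r ^ 4 / 3)"
    using norm_triangle_ineq[of "t\<^sup>2 / 2 + t ^ 3 / 3 + t ^ 4 / 6" "(t - 1) * R"]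
      norm_triangle_ineq[of "t\<^sup>2 / 2 + t ^ 3 / 3" "t ^ 4 / 6"] norm_triangle_ineq[of "t\<^sup>2 / 2" "t ^ 3 / 3"]
    by (simp add: norm_divide norm_power r_def)
  also have "\<dots> = r\<^sup>2 * (1 / 2 + r / 3 + r\<^sup>2 / 6 + (1 + r) * r\<^sup>2 / 3)"
    by (simp add: algebra_simps power2_eq_square power3_eq_cube power4_eq_xxxx)
  also have "\<dots> \<le> r\<^sup>2 * 1"
  proof (rule mult_left_mono)
    have "r\<^sup>2 \<le> (1 / 2)\<^sup>2" using r by (intro power_mono) auto
    moreover have "(1 + r) * r\<^sup>2 \<le> (3 / 2) * (1 / 2)\<^sup>2"
      using r \<open>r\<^sup>2 \<le> (1 / 2)\<^sup>2\<close> by (intro mult_mono) auto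
    ultimately show "1 / 2 + r / 3 + r\<^sup>2 / 6 + (1 + r) * r\<^sup>2 / 3 \<le> 1"
      using r by (simp add: power2_eq_square)
  qed simp
  finally show ?thesis by (simp add: r_def)
qed

lemma norm_div_norm_one_plus_le:
  fixes w :: complex
  assumes "w \<noteq> - 1" "1 + w * exp (w + 1) \<noteq> 0"
  shows "norm w / norm (1 + w) \<le> max 3 ((3 / 2) / sqrt (norm (1 + w * exp (w + 1))))"
proof (cases "norm w \<le> 3 * norm (1 + w)")
  case True
  have "norm (1 + w) > 0" using assms(1) by (simp add: add_eq_0_iff)
  with True have "norm w / norm (1 + w) \<le> 3" by (simp add: divide_le_eq)
  then show ?thesis by (rule order_trans) simp
next
  case False
  define t where "t = 1 + w"
  define f where "f = 1 + w * exp (w + 1)"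
  have "t \<noteq> 0" "f \<noteq> 0" using assms by (auto simp: t_def f_def add_eq_0_iff)
  have w: "norm w \<le> norm t + 1"
    using norm_triangle_ineq4[of t 1] by (simp add: t_def)
  with False have "norm t < 1 / 2" by (simp add: t_def)
  with w have "norm w \<le> 3 / 2" by simp
  have "w + 1 = t" "w = t - 1" by (simp_all add: t_def)
  then have "f = 1 + (t - 1) * exp t" by (simp add: f_def)
  then have "norm f \<le> (norm t)\<^sup>2"
    using norm_one_plus_shifted_wexp_le \<open>norm t < 1 / 2\<close> by simp
  have "(norm w * sqrt (norm f))\<^sup>2 = (norm w)\<^sup>2 * norm f"
    by (simp add: power_mult_distrib)
  also have "\<dots> \<le> (3 / 2)\<^sup>2 * (norm t)\<^sup>2"
    using \<open>norm w \<le> 3 / 2\<close> \<open>norm f \<le> (norm t)\<^sup>2\<close> by (intro mult_mono power_mono) auto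
  also have "\<dots> = (3 / 2 * norm t)\<^sup>2"
    by (rule power_mult_distrib[symmetric])
  finally have "norm w * sqrt (norm f) \<le> 3 / 2 * norm t"
    by (rule power2_le_imp_le) simp
  then have "norm w / norm t \<le> (3 / 2) / sqrt (norm f)"
    using \<open>t \<noteq> 0\<close> \<open>f \<noteq> 0\<close> by (simp add: field_simps)
  then show ?thesis by (simp add: t_def f_def)
qed

theorem theorem6:
  fixes k :: int and z :: complex
  assumes "z \<noteq> 0" and "z \<noteq> - 1 / exp 1"
  shows "norm (LambertW_deriv k z)
           \<le> (1 / norm z) * max 3 ((3/2) / sqrt (norm (exp 1 * z + 1)))"
proof -
  define W where "W = LambertW k z"
  have W: "W * exp W = z"
    using LambertW_wexp[OF assms] by (simp add: W_def)
  then have ez: "exp 1 * z + 1 = 1 + W * exp (W + 1)"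
    by (simp add: W[symmetric] exp_add mult_ac)
  have "W \<noteq> - 1"
    using W assms(2) by (auto simp: exp_minus field_simps)
  moreover have "exp 1 * z + 1 \<noteq> 0"
    using assms(2) by (auto simp: field_simps add_eq_0_iff)
  ultimately have "norm W / norm (1 + W) \<le> max 3 ((3 / 2) / sqrt (norm (exp 1 * z + 1)))"
    using norm_div_norm_one_plus_le[of W] by (simp add: ez)
  moreover have "norm (LambertW_deriv k z) = 1 / norm z * (norm W / norm (1 + W))"
    by (simp add: LambertW_deriv_def W_def norm_divide norm_mult)
  ultimately show ?thesis
    by (metis mult_left_mono zero_le_divide_1_iff norm_ge_zero)
qed

end
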